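(* Let $P,Q$ be probability measures on $(\mathcal{X},\mathcal{A})$, $\lambda=\mathrm{TV}(P,Q)$, $\rho:\mathcal{X}\to I\subseteq\mathbb{R}$ measurable, and $\alpha\in(0,1)$. Let $Q_{m,n,\alpha}:J_{m,n}\times[0,1]\to\mathbb{R}$ be a bounding function at level $\alpha$ (respectively an asymptotic bounding function at level $\alpha$) for the counting process $(V_{m,z})_{z\in J_{m,n}}$ built from $\rho$, and define $$\hat\lambda^{\rho}=\inf\Big\{\tilde\lambda\in[0,1]:\ \sup_{z\in J_{m,n}}\big[V_{m,z}-Q_{m,n,\alpha}(z,\tilde\lambda)\big]\le0\Big\}.$$ Then $\mathbb{P}(\hat\lambda^{\rho}>\lambda)\le\alpha$ (respectively $\limsup_{N\to\infty}\mathbb{P}(\hat\lambda^{\rho}>\lambda)\le\alpha$).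
   Context: For each $N$: deterministic positive integers $m,n$ with $N=m+n$, $m\le n$, $m/N\to\pi\in(0,1)$; independent samples $X_1,\dots,X_m$ i.i.d. $\sim P$ and $Y_1,\dots,Y_n$ i.i.d. $\sim Q$. Let $\rho_{(1)}\le\dots\le\rho_{(N)}$ be the order statistics of the combined values $\rho(X_1),\dots,\rho(X_m),\rho(Y_1),\dots,\rho(Y_n)$, $J_{m,n}=\{1,\dots,N-1\}$, and $V_{m,z}=\#\{i\le m:\rho(X_i)\le\rho_{(z)}\}$. A function $Q_{m,n,\alpha}$ on $J_{m,n}\times[0,1]$ is a bounding function at level $\alpha$ if $\mathbb{P}\big(\sup_{z\in J_{m,n}}[V_{m,z}-Q_{m,n,\alpha}(z,\lambda)]>0\big)\le\alpha$ with $\lambda=\mathrm{TV}(P,Q)$ the true total variation distance; it is an asymptotic bounding function at level $\alpha$ if instead $\limsup_{N\to\infty}\mathbb{P}\big(\sup_{z\in J_{m,n}}[V_{m,z}-Q_{m,n,\alpha}(z,\lambda)]>0\big)\le\alpha$. *)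

theory Defs
  imports "HOL-Probability.Probability"
begin

definition TV :: "'a measure \<Rightarrow> 'a measure \<Rightarrow> real" where
  "TV P Q = (SUP A\<in>sets P. \<bar>measure P A - measure Q A\<bar>)"

definition order_stat :: "real list \<Rightarrow> nat \<Rightarrow> real" where
  "order_stat xs z = sort xs ! (z - 1)"

text \<open>Counting process V_{m,z}: a i = rho(X_i) (i = 1..m), b j = rho(Y_j) (j = 1..n).\<close>
definition V_count :: "nat \<Rightarrow> nat \<Rightarrow> (nat \<Rightarrow> real) \<Rightarrow> (nat \<Rightarrow> real) \<Rightarrow> nat \<Rightarrow> nat" where
  "V_count m n a b z =
     card {i \<in> {1..m}. a i \<le> order_stat (map a [1..<m+1] @ map b [1..<n+1]) z}"

definition sup_dev :: "nat \<Rightarrow> nat \<Rightarrow> (nat \<Rightarrow> real) \<Rightarrow> (nat \<Rightarrow> real)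
                        \<Rightarrow> (nat \<Rightarrow> real \<Rightarrow> real) \<Rightarrow> real \<Rightarrow> real" where
  "sup_dev m n a b Qz l = Max ((\<lambda>z. real (V_count m n a b z) - Qz z l) ` {1..m+n-1})"

text \<open>The estimator; infimum taken in the extended reals (inf of the empty set is +infinity).\<close>
definition lambda_hat :: "nat \<Rightarrow> nat \<Rightarrow> (nat \<Rightarrow> real) \<Rightarrow> (nat \<Rightarrow> real)
                        \<Rightarrow> (nat \<Rightarrow> real \<Rightarrow> real) \<Rightarrow> ereal" where
  "lambda_hat m n a b Qz = Inf (ereal ` {l \<in> {0..1}. sup_dev m n a b Qz l \<le> 0})"

end

theory Submission
  imports Defs
begin

text \<open>The true distance \<open>\<lambda> = TV P Q\<close> lies in \<open>[0,1]\<close>, so whenever the bounding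
  function's event \<open>sup_z [V_{m,z} - Q(z,\<lambda>)] > 0\<close> fails, \<open>\<lambda>\<close> belongs to the set whose
  infimum is \<open>\<lambda>_hat\<close>, giving \<open>\<lambda>_hat \<le> \<lambda>\<close>. Hence \<open>{\<lambda>_hat > \<lambda>}\<close> is contained in that
  event and both the finite-sample and the asymptotic bounds transfer by monotonicity of
  measure and of limsup. The only technical point is that the event is measurable: the
  order statistic in \<open>V_{m,z}\<close> is eliminated by counting ranks.\<close>

lemma le_sort_nth_iff_length_filter_less:
  fixes xs :: "'a::linorder list"
  assumes k: "k < length xs"
  shows "x \<le> sort xs ! k \<longleftrightarrow> length (filter (\<lambda>y. y < x) xs) \<le> k"
proof -
  define ys where "ys = sort xs"
  have sorted: "sorted ys" and k_ys: "k < length ys"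
    using k by (simp_all add: ys_def)
  have "length (filter (\<lambda>y. y < x) xs) = length (filter (\<lambda>y. y < x) ys)"
    unfolding ys_def by (metis mset_filter mset_sort size_mset)
  also have "\<dots> = card {i. i < length ys \<and> ys ! i < x}"
    by (simp add: length_filter_conv_card)
  finally have count: "length (filter (\<lambda>y. y < x) xs) = card {i. i < length ys \<and> ys ! i < x}" .
  show ?thesis
  proof
    assume "x \<le> sort xs ! k"
    then have "x \<le> ys ! i" if "k \<le> i" "i < length ys" for i
      using sorted_nth_mono[OF sorted that] by (simp add: ys_def)
    then have "{i. i < length ys \<and> ys ! i < x} \<subseteq> {..<k}"
      by (auto simp: not_le[symmetric])
    then show "length (filter (\<lambda>y. y < x) xs) \<le> k"
      unfolding count by (metis card_lessThan card_mono finite_lessThan)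
  next
    assume le: "length (filter (\<lambda>y. y < x) xs) \<le> k"
    show "x \<le> sort xs ! k"
    proof (rule ccontr)
      assume "\<not> x \<le> sort xs ! k"
      then have "ys ! i < x" if "i \<le> k" for i
        using sorted_nth_mono[OF sorted that k_ys] by (simp add: ys_def)
      then have "{..k} \<subseteq> {i. i < length ys \<and> ys ! i < x}"
        using k_ys by auto
      then have "Suc k \<le> card {i. i < length ys \<and> ys ! i < x}"
        by (metis card_atMost card_mono finite_Collect_conjI finite_Collect_less_nat)
      then show False using le count by simp
    qed
  qed
qed

lemma length_filter_map_upt:
  "length (filter P (map a [1..<m+1])) = card {i\<in>{1..m}. P (a i)}"
proof -
  have "length (filter P (map a [1..<m+1])) = length (filter (P \<circ> a) [1..<m+1])"
    by (simp add: filter_map)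
  also have "\<dots> = card ({i. P (a i)} \<inter> set [1..<m+1])"
    by (simp add: distinct_length_filter)
  also have "{i. P (a i)} \<inter> set [1..<m+1] = {i\<in>{1..m}. P (a i)}" by auto
  finally show ?thesis .
qed

lemma V_count_eq_card_rank:
  assumes "z \<in> {1..m+n-1}"
  shows "V_count m n a b z =
    card {i\<in>{1..m}. card {k\<in>{1..m}. a k < a i} + card {j\<in>{1..n}. b j < a i} \<le> z - 1}"
proof -
  have "z - 1 < length (map a [1..<m+1] @ map b [1..<n+1])" using assms by auto
  then show ?thesis
    unfolding V_count_def order_stat_def
    by (simp only: le_sort_nth_iff_length_filter_less filter_append length_append
        length_filter_map_upt)
qed

lemma measurable_card_Collect:
  fixes I :: "nat set"
  assumes "\<And>i. i \<in> I \<Longrightarrow> Measurable.pred M (P i)"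
  shows "(\<lambda>x. card {i\<in>I. P i x}) \<in> measurable M (count_space UNIV)"
proof (rule measurable_card)
  fix i
  have "{x\<in>space M. i \<in> {i\<in>I. P i x}} = (if i \<in> I then {x\<in>space M. P i x} else {})"
    by auto
  then show "{x\<in>space M. i \<in> {i\<in>I. P i x}} \<in> sets M"
    using assms by auto
qed

lemma borel_measurable_sup_dev:
  assumes a: "\<And>i. i \<in> {1..m} \<Longrightarrow> a i \<in> borel_measurable M"
    and b: "\<And>j. j \<in> {1..n} \<Longrightarrow> b j \<in> borel_measurable M"
  shows "(\<lambda>\<omega>. sup_dev m n (\<lambda>i. a i \<omega>) (\<lambda>j. b j \<omega>) Qz l) \<in> borel_measurable M"
proof -
  define rank where "rank i \<omega> =
    card {k\<in>{1..m}. a k \<omega> < a i \<omega>} + card {j\<in>{1..n}. b j \<omega> < a i \<omega>}" for i \<omega>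
  have rank: "rank i \<in> measurable M (count_space UNIV)" if "i \<in> {1..m}" for i
  proof -
    have [measurable]:
      "(\<lambda>\<omega>. card {k\<in>{1..m}. a k \<omega> < a i \<omega>}) \<in> measurable M (count_space UNIV)"
      "(\<lambda>\<omega>. card {j\<in>{1..n}. b j \<omega> < a i \<omega>}) \<in> measurable M (count_space UNIV)"
      using a b that by (auto intro!: measurable_card_Collect)
    show ?thesis unfolding rank_def by measurable
  qed
  have V: "(\<lambda>\<omega>. V_count m n (\<lambda>i. a i \<omega>) (\<lambda>j. b j \<omega>) z) \<in> measurable M (count_space UNIV)"
    if "z \<in> {1..m+n-1}" for z
    unfolding V_count_eq_card_rank[OF that] rank_def[symmetric]
    using rank by (intro measurable_card_Collect) auto
  show ?thesis
    unfolding sup_dev_def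
    by (intro borel_measurable_Max borel_measurable_diff measurable_compose[OF V]) auto
qed

lemma abs_measure_diff_le_1:
  assumes "prob_space P" "prob_space Q"
  shows "\<bar>measure P A - measure Q A\<bar> \<le> 1"
  using prob_space.prob_le_1[OF assms(1), of A] prob_space.prob_le_1[OF assms(2), of A]
    measure_nonneg[of P A] measure_nonneg[of Q A]
  by linarith

lemma TV_nonneg:
  assumes "prob_space P" "prob_space Q"
  shows "0 \<le> TV P Q"
proof -
  have "bdd_above ((\<lambda>A. \<bar>measure P A - measure Q A\<bar>) ` sets P)"
    using abs_measure_diff_le_1[OF assms] by (intro bdd_aboveI[where M=1]) auto
  then have "\<bar>measure P {} - measure Q {}\<bar> \<le> TV P Q"
    unfolding TV_def by (rule cSUP_upper[rotated]) simp
  then show ?thesis by simp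
qed

lemma TV_le_1:
  assumes "prob_space P" "prob_space Q"
  shows "TV P Q \<le> 1"
  unfolding TV_def using abs_measure_diff_le_1[OF assms] by (intro cSUP_least) auto

lemma sup_dev_pos_if_lambda_hat_gt:
  assumes "l \<in> {0..1}" "lambda_hat m n a b Qz > ereal l"
  shows "sup_dev m n a b Qz l > 0"
proof (rule ccontr)
  assume "\<not> sup_dev m n a b Qz l > 0"
  then have "lambda_hat m n a b Qz \<le> ereal l"
    unfolding lambda_hat_def using assms(1) by (intro Inf_lower) auto
  then show False using assms(2) by simp
qed

lemma sets_sup_dev_pos:
  assumes "\<And>i. i \<in> {1..m} \<Longrightarrow> X i \<in> measurable M Xsp"
    and "\<And>j. j \<in> {1..n} \<Longrightarrow> Y j \<in> measurable M Xsp"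
    and "\<rho> \<in> borel_measurable Xsp"
  shows "{\<omega>\<in>space M. sup_dev m n (\<lambda>i. \<rho> (X i \<omega>)) (\<lambda>j. \<rho> (Y j \<omega>)) Qz l > 0} \<in> sets M"
proof -
  have "(\<lambda>\<omega>. \<rho> (X i \<omega>)) \<in> borel_measurable M" if "i \<in> {1..m}" for i
    using measurable_compose[OF assms(1)[OF that] assms(3)] .
  moreover have "(\<lambda>\<omega>. \<rho> (Y j \<omega>)) \<in> borel_measurable M" if "j \<in> {1..n}" for j
    using measurable_compose[OF assms(2)[OF that] assms(3)] .
  ultimately show ?thesis
    by (intro borel_measurable_less borel_measurable_const borel_measurable_sup_dev)
qed

theorem proposition6:
  fixes Xsp :: "'x measure" and P Q :: "'x measure"
    and \<rho> :: "'x \<Rightarrow> real" and \<alpha> \<pi> :: real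
    and M :: "nat \<Rightarrow> 'w measure"
    and m n :: "nat \<Rightarrow> nat"
    and X Y :: "nat \<Rightarrow> nat \<Rightarrow> 'w \<Rightarrow> 'x"
    and Qf :: "nat \<Rightarrow> nat \<Rightarrow> real \<Rightarrow> real"
  assumes P: "prob_space P" "sets P = sets Xsp"
    and Q: "prob_space Q" "sets Q = sets Xsp"
    and \<rho>_meas: "\<rho> \<in> borel_measurable Xsp"
    and \<alpha>: "0 < \<alpha>" "\<alpha> < 1"
    and \<pi>: "0 < \<pi>" "\<pi> < 1"
    and mn: "\<And>N. N \<ge> 2 \<Longrightarrow> 0 < m N \<and> m N \<le> n N \<and> m N + n N = N"
    and lim: "(\<lambda>N. real (m N) / real N) \<longlonglongrightarrow> \<pi>"
    and M_prob: "\<And>N. prob_space (M N)"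
    and X_meas: "\<And>N i. N \<ge> 2 \<Longrightarrow> i \<in> {1..m N} \<Longrightarrow> X N i \<in> measurable (M N) Xsp"
    and Y_meas: "\<And>N j. N \<ge> 2 \<Longrightarrow> j \<in> {1..n N} \<Longrightarrow> Y N j \<in> measurable (M N) Xsp"
    and X_distr: "\<And>N i. N \<ge> 2 \<Longrightarrow> i \<in> {1..m N} \<Longrightarrow> distr (M N) Xsp (X N i) = P"
    and Y_distr: "\<And>N j. N \<ge> 2 \<Longrightarrow> j \<in> {1..n N} \<Longrightarrow> distr (M N) Xsp (Y N j) = Q"
    and indep: "\<And>N. N \<ge> 2 \<Longrightarrow> prob_space.indep_vars (M N) (\<lambda>_. Xsp)
                   (\<lambda>k. case k of Inl i \<Rightarrow> X N i | Inr j \<Rightarrow> Y N j)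
                   (Inl ` {1..m N} \<union> Inr ` {1..n N})"
  shows
    "(\<forall>N\<ge>2.
        measure (M N) {\<omega> \<in> space (M N).
           sup_dev (m N) (n N) (\<lambda>i. \<rho> (X N i \<omega>)) (\<lambda>j. \<rho> (Y N j \<omega>)) (Qf N) (TV P Q) > 0}
          \<le> \<alpha>
        \<longrightarrow> measure (M N) {\<omega> \<in> space (M N).
           lambda_hat (m N) (n N) (\<lambda>i. \<rho> (X N i \<omega>)) (\<lambda>j. \<rho> (Y N j \<omega>)) (Qf N) > ereal (TV P Q)}
          \<le> \<alpha>)
     \<and>
     (limsup (\<lambda>N. ereal (measure (M N) {\<omega> \<in> space (M N).
           sup_dev (m N) (n N) (\<lambda>i. \<rho> (X N i \<omega>)) (\<lambda>j. \<rho> (Y N j \<omega>)) (Qf N) (TV P Q) > 0}))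
        \<le> ereal \<alpha>
      \<longrightarrow> limsup (\<lambda>N. ereal (measure (M N) {\<omega> \<in> space (M N).
           lambda_hat (m N) (n N) (\<lambda>i. \<rho> (X N i \<omega>)) (\<lambda>j. \<rho> (Y N j \<omega>)) (Qf N) > ereal (TV P Q)}))
        \<le> ereal \<alpha>)"
proof -
  let ?sup_dev = "\<lambda>N \<omega>. sup_dev (m N) (n N) (\<lambda>i. \<rho> (X N i \<omega>)) (\<lambda>j. \<rho> (Y N j \<omega>)) (Qf N) (TV P Q)"
  let ?lambda_hat = "\<lambda>N \<omega>. lambda_hat (m N) (n N) (\<lambda>i. \<rho> (X N i \<omega>)) (\<lambda>j. \<rho> (Y N j \<omega>)) (Qf N)"
  define A where "A N = {\<omega> \<in> space (M N). ?sup_dev N \<omega> > 0}" for N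
  define B where "B N = {\<omega> \<in> space (M N). ?lambda_hat N \<omega> > ereal (TV P Q)}" for N
  have TV: "TV P Q \<in> {0..1}"
    using TV_nonneg TV_le_1 P(1) Q(1) by auto
  have "B N \<subseteq> A N" for N
    using sup_dev_pos_if_lambda_hat_gt[OF TV] by (auto simp: A_def B_def)
  moreover have "A N \<in> sets (M N)" if "N \<ge> 2" for N
    unfolding A_def using X_meas Y_meas that by (intro sets_sup_dev_pos[OF _ _ \<rho>_meas])
  ultimately have B_le_A: "measure (M N) (B N) \<le> measure (M N) (A N)" if "N \<ge> 2" for N
    using that by (intro finite_measure.finite_measure_mono[OF prob_space.finite_measure[OF M_prob]])
  then have "limsup (\<lambda>N. ereal (measure (M N) (B N))) \<le> limsup (\<lambda>N. ereal (measure (M N) (A N)))"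
    by (intro Limsup_mono) (auto simp: eventually_sequentially)
  with B_le_A show ?thesis
    unfolding A_def B_def by (meson order_trans)
qed

end
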